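(* The Cesàro operator $\mathcal C$ maps $VH(\mathbb D)$ into itself and $\mathcal C: VH(\mathbb D)\to VH(\mathbb D)$ is continuous. However, for each $k\in\mathbb N$, $\mathcal C$ does not map $H^\infty_{v_k}$ into $H^\infty_{v_k}$ (in particular it does not act continuously on $H^\infty_{v_k}$).
   Context: $\mathbb D$ is the open unit disc in $\mathbb C$ and $H(\mathbb D)$ is the space of analytic functions on $\mathbb D$ with the topology of uniform convergence on compact subsets. Define $v(z)=1$ if $|z|\le 1-1/e$ and $v(z)=(-\log(1-|z|))^{-1}$ if $1-1/e\le |z|<1$, and $v_k(z)=v(z)^k$ for $k\in\mathbb N$. For $k\in\mathbb N$, $H^\infty_{v_k}=\{f\in H(\mathbb D): \|f\|_{v_k}:=\sup_{z\in\mathbb D} v_k(z)|f(z)|<\infty\}$, a Banach space. $VH(\mathbb D)=\bigcup_{k\in\mathbb N} H^\infty_{v_k}$, endowed with the finest locally convex topology making all inclusions $H^\infty_{v_k}\subset VH(\mathbb D)$ continuous (an (LB)-space). The Cesàro operator is $\mathcal C f(z)=\frac1z\int_0^z\frac{f(\zeta)}{1-\zeta}\,d\zeta$ for $z\in\mathbb D\setminus\{0\}$ and $\mathcal C f(0)=f(0)$, for $f\in H(\mathbb D)$. *)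

theory Defs
  imports "HOL-Complex_Analysis.Complex_Analysis"
begin

text \<open>The weight v on the unit disc (values for norm z >= 1 are irrelevant).\<close>
definition wv :: "complex \<Rightarrow> real" where
  "wv z = (if norm z \<le> 1 - 1 / exp 1 then 1 else inverse (- ln (1 - norm z)))"

definition wnorm :: "nat \<Rightarrow> (complex \<Rightarrow> complex) \<Rightarrow> real" where
  "wnorm k f = (SUP z\<in>ball 0 1. wv z ^ k * norm (f z))"

definition Hv :: "nat \<Rightarrow> (complex \<Rightarrow> complex) set" where
  "Hv k = {f. f holomorphic_on ball 0 1 \<and> bounded ((\<lambda>z. wv z ^ k * norm (f z)) ` ball 0 1)}"

definition VH :: "(complex \<Rightarrow> complex) set" where
  "VH = (\<Union>k\<in>{1..}. Hv k)"

text \<open>Basic zero-neighbourhoods of the finest locally convex topology on VH making all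
  inclusions continuous: absolutely convex subsets of VH which contain a ball of each step.\<close>
definition VH_nbhd0 :: "(complex \<Rightarrow> complex) set \<Rightarrow> bool" where
  "VH_nbhd0 U \<longleftrightarrow> U \<subseteq> VH \<and>
     (\<forall>f\<in>U. \<forall>g\<in>U. \<forall>a b :: complex. norm a + norm b \<le> 1 \<longrightarrow> (\<lambda>z. a * f z + b * g z) \<in> U) \<and>
     (\<forall>k\<ge>1. \<exists>\<epsilon>>0. {f\<in>Hv k. wnorm k f < \<epsilon>} \<subseteq> U)"

definition VH_open :: "(complex \<Rightarrow> complex) set \<Rightarrow> bool" where
  "VH_open W \<longleftrightarrow> W \<subseteq> VH \<and> (\<forall>f\<in>W. \<exists>U. VH_nbhd0 U \<and> (\<lambda>u z. f z + u z) ` U \<subseteq> W)"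

definition cesaro :: "(complex \<Rightarrow> complex) \<Rightarrow> complex \<Rightarrow> complex" where
  "cesaro f z = (if z = 0 then f 0
                 else (1 / z) * contour_integral (linepath 0 z) (\<lambda>\<zeta>. f \<zeta> / (1 - \<zeta>)))"

end

theory Submission
  imports Defs
begin

text \<open>
  On the disc 1/v is the logarithmic weight L(z) = max 1 (-ln (1 - |z|)), here logw.
  If |f| \<le> M L^k, then along the segment [0,z] we have |f(tz)| \<le> M L(z)^k and
  |1 - tz| \<ge> 1 - t|z|, so integrating gives
  |C f(z)| \<le> M L(z)^k (-ln (1 - |z|)) / |z| \<le> 3 M L(z)^(k+1).
  Thus C maps each step H_{v_k} boundedly into the next one, which gives both the action on VH
  and, through the zero-neighbourhoods defining the (LB)-topology, its continuity.
  The loss of one power is sharp: C maps ln(1 - z)^k, an element of H_{v_k}, to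
  -ln(1 - z)^(k+1) / ((k+1) z), and v(x)^k times its modulus grows like -ln(1 - x) as x \<rightarrow> 1.
\<close>

section \<open>The logarithmic weight\<close>

definition logw :: "complex \<Rightarrow> real" where
  "logw z = (if norm z \<le> 1 - 1 / exp 1 then 1 else - ln (1 - norm z))"

lemma exp1_bounds: "2 \<le> exp (1::real)" "exp (1::real) \<le> 3"
  using exp_ge_add_one_self[of "1::real"] exp_le by auto

lemma logw_ge_1: "norm z < 1 \<Longrightarrow> 1 \<le> logw z"
proof (cases "norm z \<le> 1 - 1 / exp 1")
  case False
  assume z: "norm z < 1"
  then have "1 - norm z < exp (-1)" using False by (simp add: exp_minus field_simps)
  then have "ln (1 - norm z) < -1" using z
    by (metis diff_gt_0_iff_gt ln_exp ln_less_cancel_iff exp_gt_zero)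
  then show ?thesis using False by (simp add: logw_def)
qed (simp add: logw_def)

lemma neg_ln_le_logw: "norm z < 1 \<Longrightarrow> - ln (1 - norm z) \<le> logw z"
proof (cases "norm z \<le> 1 - 1 / exp 1")
  case True
  assume z: "norm z < 1"
  then have "exp (-1) \<le> 1 - norm z" using True by (simp add: exp_minus field_simps)
  then have "-1 \<le> ln (1 - norm z)" using z
    by (metis diff_gt_0_iff_gt ln_exp ln_le_cancel_iff exp_gt_zero)
  then show ?thesis using True by (simp add: logw_def)
qed (simp add: logw_def)

lemma wv_eq_inverse_logw: "wv z = inverse (logw z)"
  by (simp add: wv_def logw_def)

lemma wv_mult_logw: "norm z < 1 \<Longrightarrow> wv z * logw z = 1"
  using logw_ge_1[of z] by (simp add: wv_eq_inverse_logw)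

lemma wv_pos: "norm z < 1 \<Longrightarrow> 0 < wv z"
  using logw_ge_1[of z] by (simp add: wv_eq_inverse_logw)

lemma wv_le_1: "norm z < 1 \<Longrightarrow> wv z \<le> 1"
  using logw_ge_1[of z] by (simp add: wv_eq_inverse_logw inverse_le_1_iff)

lemma logw_mono: "norm w \<le> norm z \<Longrightarrow> norm z < 1 \<Longrightarrow> logw w \<le> logw z"
proof -
  assume a: "norm w \<le> norm z" "norm z < 1"
  have "ln (1 - norm z) \<le> ln (1 - norm w)" using a by (simp add: ln_le_cancel_iff)
  then show ?thesis using a logw_ge_1[of z] by (auto simp: logw_def)
qed

lemma neg_ln_le_norm_logw:
  assumes "0 < norm z" "norm z < 1"
  shows "- ln (1 - norm z) \<le> 3 * norm z * logw z"
proof (cases "norm z \<le> 1 - 1 / exp 1")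
  case True
  have "ln (1 / (1 - norm z)) \<le> 1 / (1 - norm z) - 1"
    using assms by (intro ln_le_minus_one) auto
  then have ln_le: "- ln (1 - norm z) \<le> norm z / (1 - norm z)"
    using assms by (simp add: ln_div field_simps)
  have "1/3 \<le> 1 / exp (1::real)" using exp1_bounds by (simp add: field_simps)
  then have "1/3 \<le> 1 - norm z" using True by linarith
  then have "norm z / (1 - norm z) \<le> 3 * norm z" using assms by (simp add: field_simps)
  then show ?thesis using ln_le True by (simp add: logw_def)
next
  case False
  have "1 / exp (1::real) \<le> 1/2" using exp1_bounds by (simp add: field_simps)
  then have "norm z > 1/2" using False by linarith
  moreover have "0 \<le> - ln (1 - norm z)" using False assms logw_ge_1[of z] by (simp add: logw_def)
  ultimately have "1 * - ln (1 - norm z) \<le> (3 * norm z) * - ln (1 - norm z)"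
    by (intro mult_right_mono) auto
  then show ?thesis using False by (simp add: logw_def)
qed

lemma mem_Hv_iff:
  "f \<in> Hv k \<longleftrightarrow> f holomorphic_on ball 0 1 \<and> (\<exists>B. \<forall>z\<in>ball 0 1. wv z ^ k * norm (f z) \<le> B)"
proof -
  have "bounded ((\<lambda>z. wv z ^ k * norm (f z)) ` ball 0 1)
        \<longleftrightarrow> (\<exists>B. \<forall>z\<in>ball 0 1. wv z ^ k * norm (f z) \<le> B)"
    using wv_pos by (auto simp: bounded_iff) (metis abs_le_D1, fastforce)
  then show ?thesis by (simp add: Hv_def)
qed

lemma Hv_holomorphic: "f \<in> Hv k \<Longrightarrow> f holomorphic_on ball 0 1"
  by (simp add: Hv_def)

lemma wnorm_upper: "f \<in> Hv k \<Longrightarrow> z \<in> ball 0 1 \<Longrightarrow> wv z ^ k * norm (f z) \<le> wnorm k f"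
  unfolding wnorm_def Hv_def by (auto intro: cSUP_upper bounded_imp_bdd_above)

lemma wnorm_least: "(\<And>z. z \<in> ball 0 1 \<Longrightarrow> wv z ^ k * norm (f z) \<le> B) \<Longrightarrow> wnorm k f \<le> B"
  unfolding wnorm_def by (rule cSUP_least) auto

lemma wnorm_nonneg:
  assumes "f \<in> Hv k"
  shows "0 \<le> wnorm k f"
proof -
  have "0 \<le> wv 0 ^ k * norm (f 0)" using wv_pos[of 0] by simp
  also have "\<dots> \<le> wnorm k f" using assms by (rule wnorm_upper) simp
  finally show ?thesis .
qed

lemma norm_le_wnorm_logw:
  assumes "f \<in> Hv k" "z \<in> ball 0 1"
  shows "norm (f z) \<le> wnorm k f * logw z ^ k"
proof -
  have "norm (f z) = logw z ^ k * (wv z ^ k * norm (f z))"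
    using wv_mult_logw[of z] assms by (simp flip: power_mult_distrib add: algebra_simps)
  also have "\<dots> \<le> logw z ^ k * wnorm k f"
    using wnorm_upper[OF assms] logw_ge_1[of z] assms by (intro mult_left_mono) auto
  finally show ?thesis by (simp add: mult.commute)
qed

lemma cesaro_primitive:
  assumes "f holomorphic_on ball 0 1"
  obtains G where "\<And>w. w \<in> ball 0 1 \<Longrightarrow> (G has_field_derivative f w / (1 - w)) (at w within ball 0 1)"
proof -
  have "(\<lambda>w. f w / (1 - w)) holomorphic_on ball 0 1"
    by (intro holomorphic_intros assms) auto
  then show ?thesis
    using holomorphic_convex_primitive'[OF convex_ball open_ball] that by blast
qed

lemma cesaro_eq_primitive:
  assumes G: "\<And>w. w \<in> ball 0 1 \<Longrightarrow> (G has_field_derivative f w / (1 - w)) (at w within ball 0 1)"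
    and z: "z \<in> ball 0 1" "z \<noteq> 0"
  shows "cesaro f z = (G z - G 0) / z"
proof -
  have "path_image (linepath 0 z) \<subseteq> ball 0 1"
    using z by (simp add: closed_segment_subset)
  then have "((\<lambda>w. f w / (1 - w)) has_contour_integral G z - G 0) (linepath 0 z)"
    using contour_integral_primitive[OF G, of "linepath 0 z"] by simp
  then show ?thesis
    using z contour_integral_unique by (simp add: cesaro_def)
qed

lemma cesaro_holomorphic:
  assumes "f holomorphic_on ball 0 1"
  shows "cesaro f holomorphic_on ball 0 1"
proof -
  obtain G where G: "\<And>w. w \<in> ball 0 1 \<Longrightarrow> (G has_field_derivative f w / (1 - w)) (at w within ball 0 1)"
    using cesaro_primitive[OF assms] by blast
  have G_at: "(G has_field_derivative f w / (1 - w)) (at w)" if "w \<in> ball 0 1" for w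
    using G[OF that] that by (metis at_within_open open_ball)
  then have "G holomorphic_on ball 0 1"
    using holomorphic_on_def field_differentiable_def field_differentiable_at_within by blast
  then have "(\<lambda>z. if z = 0 then deriv G 0 else (G z - G 0) / (z - 0)) holomorphic_on ball 0 1"
    by (rule pole_lemma_open) simp
  moreover have "deriv G 0 = f 0"
    using DERIV_imp_deriv[OF G_at[of 0]] by simp
  ultimately show ?thesis
    by (elim holomorphic_transform) (metis cesaro_def cesaro_eq_primitive[OF G] diff_zero)
qed

lemma cesaro_lincomb:
  assumes f: "f holomorphic_on ball 0 1" and g: "g holomorphic_on ball 0 1" and z: "z \<in> ball 0 1"
  shows "cesaro (\<lambda>w. a * f w + b * g w) z = a * cesaro f z + b * cesaro g z"
proof (cases "z = 0")
  case False
  obtain F where F: "\<And>w. w \<in> ball 0 1 \<Longrightarrow> (F has_field_derivative f w / (1 - w)) (at w within ball 0 1)"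
    using cesaro_primitive[OF f] by blast
  obtain G where G: "\<And>w. w \<in> ball 0 1 \<Longrightarrow> (G has_field_derivative g w / (1 - w)) (at w within ball 0 1)"
    using cesaro_primitive[OF g] by blast
  have "((\<lambda>w. a * F w + b * G w) has_field_derivative (a * f w + b * g w) / (1 - w))
          (at w within ball 0 1)" if "w \<in> ball 0 1" for w
    using DERIV_add[OF DERIV_cmult[OF F[OF that]] DERIV_cmult[OF G[OF that]]]
    by (simp add: add_divide_distrib)
  then have "cesaro (\<lambda>w. a * f w + b * g w) z = (a * F z + b * G z - (a * F 0 + b * G 0)) / z"
    by (rule cesaro_eq_primitive[OF _ z False])
  also have "\<dots> = a * ((F z - F 0) / z) + b * ((G z - G 0) / z)"
    using False by (simp add: field_simps)
  also have "\<dots> = a * cesaro f z + b * cesaro g z"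
    using cesaro_eq_primitive[OF F z False] cesaro_eq_primitive[OF G z False] by simp
  finally show ?thesis .
qed (simp add: cesaro_def)

section \<open>Cesaro loses one logarithm\<close>

lemma has_integral_log_kernel:
  fixes r :: real
  assumes "0 \<le> r" "r < 1"
  shows "((\<lambda>t. r / (1 - t * r)) has_integral - ln (1 - r)) {0..1}"
proof -
  have "((\<lambda>t. r / (1 - t * r)) has_integral (- ln (1 - 1 * r)) - (- ln (1 - 0 * r))) {0..1}"
  proof (rule fundamental_theorem_of_calculus)
    fix t :: real assume "t \<in> {0..1}"
    then have "t * r < 1" using assms mult_left_le_one_le[of r t] by auto
    then show "((\<lambda>t. - ln (1 - t * r)) has_vector_derivative r / (1 - t * r)) (at t within {0..1})"
      unfolding has_real_derivative_iff_has_vector_derivative[symmetric]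
      by (auto intro!: derivative_eq_intros simp: field_simps)
  qed simp
  then show ?thesis by simp
qed

lemma norm_cesaro_le_segment_bound:
  assumes f: "f holomorphic_on ball 0 1" and z: "z \<in> ball 0 1" "z \<noteq> 0"
    and bound: "\<And>t. t \<in> {0..1} \<Longrightarrow> norm (f (of_real t * z)) \<le> C"
  shows "norm (cesaro f z) \<le> C * - ln (1 - norm z) / norm z"
proof -
  define r where "r = norm z"
  have r: "0 < r" "r < 1" using z by (auto simp: r_def)
  define h where "h = (\<lambda>w. f w / (1 - w))"
  have "h holomorphic_on ball 0 1"
    unfolding h_def by (intro holomorphic_intros f) auto
  moreover have "path_image (linepath 0 z) \<subseteq> ball 0 1"
    using z by (simp add: closed_segment_subset)
  ultimately obtain I where I: "(h has_contour_integral I) (linepath 0 z)"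
    using contour_integrable_holomorphic_simple[of h "ball 0 1"]
    unfolding contour_integrable_on_def by blast
  then have "contour_integral (linepath 0 z) h = I"
    by (rule contour_integral_unique)
  then have cesaro_eq: "cesaro f z = I / z"
    using z by (simp add: cesaro_def h_def)
  have I_real: "((\<lambda>t. h (of_real t * z) * z) has_integral I) {0..1}"
    using I unfolding has_contour_integral_linepath by (simp add: linepath_def scaleR_conv_of_real)
  have "norm (f (of_real 0 * z)) \<le> C" by (rule bound) simp
  then have C0: "0 \<le> C" by (metis norm_ge_zero order_trans)
  have kernel: "((\<lambda>t. C * (r / (1 - t * r))) has_integral C * - ln (1 - r)) {0..1}"
    using has_integral_mult_right[OF has_integral_log_kernel] r by simp
  have "norm (h (of_real t * z) * z) \<le> C * (r / (1 - t * r))"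
    if t: "t \<in> {0..1}" for t
  proof -
    have norm_tz: "norm (of_real t * z) = t * r" using t by (simp add: r_def norm_mult)
    have "t * r \<le> r" using r t by (auto intro!: mult_left_le_one_le)
    with r have "t * r < 1" by linarith
    moreover have "1 - t * r \<le> norm (1 - of_real t * z)"
      using norm_triangle_ineq2[of 1 "of_real t * z"] norm_tz by simp
    ultimately have "norm (f (of_real t * z)) / norm (1 - of_real t * z) \<le> C / (1 - t * r)"
      using bound[OF t] C0 by (intro frac_le) auto
    then have "norm (f (of_real t * z)) / norm (1 - of_real t * z) * r \<le> C / (1 - t * r) * r"
      using r by (intro mult_right_mono) auto
    then show ?thesis
      by (simp add: h_def norm_mult norm_divide r_def)
  qed
  then have "norm I \<le> C * - ln (1 - r)"
    using integral_norm_bound_integral[OF has_integral_integrable[OF I_real]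
        has_integral_integrable[OF kernel]] integral_unique[OF I_real] integral_unique[OF kernel]
    by simp
  then have "norm I / r \<le> C * - ln (1 - r) / r"
    using r by (intro divide_right_mono) auto
  then show ?thesis
    by (simp add: cesaro_eq norm_divide r_def)
qed

lemma norm_cesaro_le_logw:
  assumes f: "f holomorphic_on ball 0 1" and z: "z \<in> ball 0 1"
    and bound: "\<And>w. w \<in> ball 0 1 \<Longrightarrow> norm (f w) \<le> M * logw w ^ k"
  shows "norm (cesaro f z) \<le> 3 * M * logw z ^ Suc k"
proof -
  have L1: "1 \<le> logw z" using z logw_ge_1 by simp
  have M0: "0 \<le> M" using bound[of 0] by (simp add: logw_def) (meson norm_ge_zero order_trans)
  show ?thesis
  proof (cases "z = 0")
    case True
    have "1 * M \<le> (3 * logw z ^ Suc k) * M"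
      using L1 M0 one_le_power[OF L1, of "Suc k"] by (intro mult_right_mono) auto
    then show ?thesis using True bound[of 0] by (simp add: cesaro_def logw_def)
  next
    case False
    have "norm (f (of_real t * z)) \<le> M * logw z ^ k" if t: "t \<in> {0..1}" for t
    proof -
      have norm_tz: "norm (of_real t * z) \<le> norm z"
        using t by (simp add: norm_mult mult_left_le_one_le)
      with z have "of_real t * z \<in> ball 0 1" by simp
      then have "norm (f (of_real t * z)) \<le> M * logw (of_real t * z) ^ k" by (rule bound)
      also have "\<dots> \<le> M * logw z ^ k"
        using norm_tz z M0 logw_ge_1[of "of_real t * z"]
        by (intro mult_left_mono power_mono logw_mono) auto
      finally show ?thesis .
    qed
    then have "norm (cesaro f z) \<le> M * logw z ^ k * - ln (1 - norm z) / norm z"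
      by (rule norm_cesaro_le_segment_bound[OF f z False])
    also have "\<dots> \<le> M * logw z ^ k * (3 * norm z * logw z) / norm z"
      using neg_ln_le_norm_logw[of z] z False M0 L1
      by (intro divide_right_mono mult_left_mono) auto
    also have "\<dots> = 3 * M * logw z ^ Suc k"
      using False by simp
    finally show ?thesis .
  qed
qed

lemma cesaro_Hv_Suc:
  assumes f: "f \<in> Hv k"
  shows "cesaro f \<in> Hv (Suc k)" "wnorm (Suc k) (cesaro f) \<le> 3 * wnorm k f"
proof -
  have bound: "wv z ^ Suc k * norm (cesaro f z) \<le> 3 * wnorm k f" if z: "z \<in> ball 0 1" for z
  proof -
    have "wv z ^ Suc k * norm (cesaro f z) \<le> wv z ^ Suc k * (3 * wnorm k f * logw z ^ Suc k)"
      using norm_cesaro_le_logw[OF Hv_holomorphic[OF f] z norm_le_wnorm_logw[OF f]] wv_pos[of z] z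
      by (intro mult_left_mono) auto
    also have "\<dots> = 3 * wnorm k f * (wv z * logw z) ^ Suc k"
      by (simp add: power_mult_distrib)
    finally show ?thesis using wv_mult_logw[of z] z by simp
  qed
  then show "cesaro f \<in> Hv (Suc k)"
    unfolding mem_Hv_iff using cesaro_holomorphic[OF Hv_holomorphic[OF f]] by blast
  show "wnorm (Suc k) (cesaro f) \<le> 3 * wnorm k f"
    using bound by (rule wnorm_least)
qed

section \<open>Continuity on the inductive limit\<close>

lemma Hv_mono:
  assumes f: "f \<in> Hv k" and "k \<le> m"
  shows "f \<in> Hv m"
proof -
  obtain B where B: "\<And>z. z \<in> ball 0 1 \<Longrightarrow> wv z ^ k * norm (f z) \<le> B"
    using f unfolding mem_Hv_iff by blast
  have "wv z ^ m * norm (f z) \<le> B" if z: "z \<in> ball 0 1" for z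
  proof -
    have "wv z ^ m \<le> wv z ^ k"
      using wv_pos[of z] wv_le_1[of z] z \<open>k \<le> m\<close> by (intro power_decreasing) auto
    then show ?thesis
      using B[OF z] mult_right_mono[of "wv z ^ m" "wv z ^ k" "norm (f z)"] by simp
  qed
  then show ?thesis using Hv_holomorphic[OF f] unfolding mem_Hv_iff by blast
qed

lemma Hv_lincomb:
  assumes f: "f \<in> Hv k" and g: "g \<in> Hv k"
  shows "(\<lambda>z. a * f z + b * g z) \<in> Hv k"
proof -
  obtain B C where B: "\<And>z. z \<in> ball 0 1 \<Longrightarrow> wv z ^ k * norm (f z) \<le> B"
    and C: "\<And>z. z \<in> ball 0 1 \<Longrightarrow> wv z ^ k * norm (g z) \<le> C"
    using f g unfolding mem_Hv_iff by blast
  have "wv z ^ k * norm (a * f z + b * g z) \<le> norm a * B + norm b * C" if z: "z \<in> ball 0 1" for z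
  proof -
    have "wv z ^ k * norm (a * f z + b * g z) \<le> wv z ^ k * (norm a * norm (f z) + norm b * norm (g z))"
      using wv_pos[of z] z
      by (intro mult_left_mono) (auto simp: norm_mult intro: order_trans[OF norm_triangle_ineq])
    also have "\<dots> = norm a * (wv z ^ k * norm (f z)) + norm b * (wv z ^ k * norm (g z))"
      by (simp add: algebra_simps)
    also have "\<dots> \<le> norm a * B + norm b * C"
      using B[OF z] C[OF z] by (intro add_mono mult_left_mono) auto
    finally show ?thesis .
  qed
  moreover have "(\<lambda>z. a * f z + b * g z) holomorphic_on ball 0 1"
    using Hv_holomorphic[OF f] Hv_holomorphic[OF g] by (intro holomorphic_intros)
  ultimately show ?thesis unfolding mem_Hv_iff by blast
qed

lemma VH_holomorphic: "f \<in> VH \<Longrightarrow> f holomorphic_on ball 0 1"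
  unfolding VH_def using Hv_holomorphic by auto

lemma VH_lincomb:
  assumes f: "f \<in> VH" and g: "g \<in> VH"
  shows "(\<lambda>z. a * f z + b * g z) \<in> VH"
proof -
  obtain k m where k: "k \<ge> 1" "f \<in> Hv k" and m: "m \<ge> 1" "g \<in> Hv m"
    using f g unfolding VH_def by auto
  have "(\<lambda>z. a * f z + b * g z) \<in> Hv (max k m)"
    using Hv_mono[OF k(2), of "max k m"] Hv_mono[OF m(2), of "max k m"] by (intro Hv_lincomb) auto
  then show ?thesis unfolding VH_def using k by (auto intro!: bexI[of _ "max k m"])
qed

text \<open>Elements of \<open>VH\<close> are functions on all of \<open>\<complex>\<close> whose values off the disc are
  unconstrained (in particular \<open>cesaro\<close> there is junk); a difference vanishing on the disc has
  weighted norm 0 and so lies in every zero-neighbourhood.\<close>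

lemma VH_open_cong:
  assumes W: "VH_open W" and g: "g \<in> W" and eq: "\<And>z. z \<in> ball 0 1 \<Longrightarrow> g' z = g z"
  shows "g' \<in> W"
proof -
  obtain U where U: "VH_nbhd0 U" "(\<lambda>u z. g z + u z) ` U \<subseteq> W"
    using W g unfolding VH_open_def by blast
  obtain \<epsilon> where "\<epsilon> > 0" and small: "{f\<in>Hv 1. wnorm 1 f < \<epsilon>} \<subseteq> U"
    using U(1) unfolding VH_nbhd0_def by auto
  define h where "h z = g' z - g z" for z
  have h0: "h z = 0" if "z \<in> ball 0 1" for z
    using eq[OF that] by (simp add: h_def)
  have "(\<lambda>z. 0) holomorphic_on ball 0 1" by simp
  then have "h holomorphic_on ball 0 1"
    by (rule holomorphic_transform) (simp add: h0)
  then have "h \<in> Hv 1"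
    by (auto simp: mem_Hv_iff h0)
  moreover have "wnorm 1 h \<le> 0"
    by (rule wnorm_least) (simp add: h0)
  ultimately have "h \<in> U" using small \<open>\<epsilon> > 0\<close> by auto
  then have "(\<lambda>z. g z + h z) \<in> W" using U(2) by auto
  then show ?thesis by (simp add: h_def)
qed

lemma VH_nbhd0_vimage:
  assumes U: "VH_nbhd0 U"
    and lin: "\<And>u v a b z. u \<in> VH \<Longrightarrow> v \<in> VH \<Longrightarrow> z \<in> ball 0 1 \<Longrightarrow>
               T (\<lambda>z. a * u z + b * v z) z = a * T u z + b * T v z"
    and bdd: "\<And>k. k \<ge> 1 \<Longrightarrow> \<exists>m\<ge>1. \<exists>C\<ge>0. \<forall>u\<in>Hv k. T u \<in> Hv m \<and> wnorm m (T u) \<le> C * wnorm k u"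
  shows "VH_nbhd0 {u\<in>VH. \<exists>v\<in>U. \<forall>z\<in>ball 0 1. T u z = v z}"
  unfolding VH_nbhd0_def
proof (intro conjI allI impI ballI)
  fix u v and a b :: complex
  assume u: "u \<in> {u\<in>VH. \<exists>v\<in>U. \<forall>z\<in>ball 0 1. T u z = v z}"
    and v: "v \<in> {u\<in>VH. \<exists>v\<in>U. \<forall>z\<in>ball 0 1. T u z = v z}"
    and ab: "norm a + norm b \<le> 1"
  obtain u' v' where "u' \<in> U" "v' \<in> U" and u': "\<forall>z\<in>ball 0 1. T u z = u' z"
    and v': "\<forall>z\<in>ball 0 1. T v z = v' z"
    using u v by blast
  then have "(\<lambda>z. a * u' z + b * v' z) \<in> U"
    using U ab unfolding VH_nbhd0_def by blast
  moreover have "\<forall>z\<in>ball 0 1. T (\<lambda>z. a * u z + b * v z) z = a * u' z + b * v' z"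
    using u v u' v' lin by simp
  ultimately show "(\<lambda>z. a * u z + b * v z) \<in> {u\<in>VH. \<exists>v\<in>U. \<forall>z\<in>ball 0 1. T u z = v z}"
    using u v by (auto intro!: VH_lincomb)
next
  fix k :: nat assume k: "k \<ge> 1"
  obtain m C where "m \<ge> 1" "C \<ge> 0" and T: "\<forall>u\<in>Hv k. T u \<in> Hv m \<and> wnorm m (T u) \<le> C * wnorm k u"
    using bdd[OF k] by blast
  obtain \<epsilon> where "\<epsilon> > 0" and small: "{f\<in>Hv m. wnorm m f < \<epsilon>} \<subseteq> U"
    using U \<open>m \<ge> 1\<close> unfolding VH_nbhd0_def by blast
  show "\<exists>\<delta>>0. {u\<in>Hv k. wnorm k u < \<delta>} \<subseteq> {u\<in>VH. \<exists>v\<in>U. \<forall>z\<in>ball 0 1. T u z = v z}"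
  proof (intro exI conjI subsetI)
    show "\<epsilon> / (C + 1) > 0" using \<open>\<epsilon> > 0\<close> \<open>C \<ge> 0\<close> by simp
    fix u assume "u \<in> {u\<in>Hv k. wnorm k u < \<epsilon> / (C + 1)}"
    then have u: "u \<in> Hv k" and small_u: "wnorm k u < \<epsilon> / (C + 1)" by auto
    have "wnorm m (T u) \<le> C * wnorm k u" using T u by blast
    also have "\<dots> \<le> (C + 1) * wnorm k u" using wnorm_nonneg[OF u] by (simp add: algebra_simps)
    also have "\<dots> < \<epsilon>" using small_u \<open>C \<ge> 0\<close> by (simp add: field_simps)
    finally have "T u \<in> U" using small T u by blast
    moreover have "u \<in> VH" using u k unfolding VH_def by auto
    ultimately show "u \<in> {u\<in>VH. \<exists>v\<in>U. \<forall>z\<in>ball 0 1. T u z = v z}" by blast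
  qed
qed (use U in \<open>auto simp: VH_nbhd0_def\<close>)

lemma VH_open_vimage:
  assumes W: "VH_open W"
    and lin: "\<And>u v a b z. u \<in> VH \<Longrightarrow> v \<in> VH \<Longrightarrow> z \<in> ball 0 1 \<Longrightarrow>
               T (\<lambda>z. a * u z + b * v z) z = a * T u z + b * T v z"
    and bdd: "\<And>k. k \<ge> 1 \<Longrightarrow> \<exists>m\<ge>1. \<exists>C\<ge>0. \<forall>u\<in>Hv k. T u \<in> Hv m \<and> wnorm m (T u) \<le> C * wnorm k u"
  shows "VH_open {f\<in>VH. T f \<in> W}"
  unfolding VH_open_def
proof (intro conjI ballI)
  fix f assume "f \<in> {f\<in>VH. T f \<in> W}"
  then have f: "f \<in> VH" "T f \<in> W" by auto
  obtain U where U: "VH_nbhd0 U" "(\<lambda>u z. T f z + u z) ` U \<subseteq> W"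
    using W f unfolding VH_open_def by blast
  have "(\<lambda>u z. f z + u z) ` {u\<in>VH. \<exists>v\<in>U. \<forall>z\<in>ball 0 1. T u z = v z} \<subseteq> {f\<in>VH. T f \<in> W}"
  proof safe
    fix u v assume u: "u \<in> VH" and "v \<in> U" and v: "\<forall>z\<in>ball 0 1. T u z = v z"
    have "(\<lambda>z. T f z + v z) \<in> W" using U(2) \<open>v \<in> U\<close> by blast
    moreover have "T (\<lambda>z. f z + u z) z = T f z + v z" if "z \<in> ball 0 1" for z
      using lin[OF f(1) u that, of 1 1] v that by simp
    ultimately show "T (\<lambda>z. f z + u z) \<in> W" by (rule VH_open_cong[OF W])
    show "(\<lambda>z. f z + u z) \<in> VH" using VH_lincomb[OF f(1) u, of 1 1] by simp
  qed
  then show "\<exists>U. VH_nbhd0 U \<and> (\<lambda>u z. f z + u z) ` U \<subseteq> {f\<in>VH. T f \<in> W}"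
    using VH_nbhd0_vimage[OF U(1) lin bdd] by blast
qed auto

section \<open>Sharpness\<close>

lemma one_minus_notin_nonpos_Reals: "norm (z::complex) < 1 \<Longrightarrow> 1 - z \<notin> \<real>\<^sub>\<le>\<^sub>0"
  using abs_Re_le_cmod[of z] by (auto simp: complex_nonpos_Reals_iff)

lemma norm_Ln_one_minus_le:
  assumes z: "z \<in> ball 0 1"
  shows "norm (Ln (1 - z)) \<le> (1 + pi) * logw z"
proof -
  have nz: "norm z < 1" using z by simp
  have w0: "1 - z \<noteq> 0" using nz by auto
  have "\<bar>ln (norm (1 - z))\<bar> \<le> logw z"
  proof (cases "norm (1 - z) \<le> 1")
    case True
    have "ln (1 - norm z) \<le> ln (norm (1 - z))"
      using norm_triangle_ineq2[of 1 z] nz w0 by (simp add: ln_le_cancel_iff)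
    then show ?thesis using True w0 neg_ln_le_logw[OF nz] by simp
  next
    case False
    have "ln (norm (1 - z)) \<le> norm (1 - z) - 1" using w0 by (intro ln_le_minus_one) simp
    then show ?thesis using False norm_triangle_ineq4[of 1 z] nz logw_ge_1[OF nz] by simp
  qed
  moreover have "\<bar>Im (Ln (1 - z))\<bar> \<le> pi"
    using mpi_less_Im_Ln[OF w0] Im_Ln_le_pi[OF w0] by simp
  ultimately have "norm (Ln (1 - z)) \<le> logw z + pi"
    using cmod_le[of "Ln (1 - z)"] w0 by simp
  moreover have "pi \<le> pi * logw z"
    using logw_ge_1[OF nz] mult_left_mono[of 1 "logw z" pi] by simp
  ultimately show ?thesis by (simp only: distrib_right mult_1)
qed

lemma Ln_one_minus_power_in_Hv: "(\<lambda>z. Ln (1 - z) ^ k) \<in> Hv k"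
proof -
  have "(\<lambda>z. Ln (1 - z) ^ k) holomorphic_on ball 0 1"
    using one_minus_notin_nonpos_Reals by (intro holomorphic_intros) force
  moreover have "wv z ^ k * norm (Ln (1 - z) ^ k) \<le> (1 + pi) ^ k" if z: "z \<in> ball 0 1" for z
  proof -
    have "wv z * norm (Ln (1 - z)) \<le> wv z * ((1 + pi) * logw z)"
      using norm_Ln_one_minus_le[OF z] wv_pos[of z] z by (intro mult_left_mono) auto
    also have "\<dots> = 1 + pi" using wv_mult_logw[of z] z by (simp add: algebra_simps)
    finally have "(wv z * norm (Ln (1 - z))) ^ k \<le> (1 + pi) ^ k"
      using wv_pos[of z] z by (intro power_mono) auto
    then show ?thesis by (simp add: norm_power power_mult_distrib)
  qed
  ultimately show ?thesis unfolding mem_Hv_iff by blast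
qed

lemma cesaro_Ln_one_minus_power:
  fixes z :: complex
  assumes z: "z \<in> ball 0 1" "z \<noteq> 0"
  shows "cesaro (\<lambda>w. Ln (1 - w) ^ k) z = - (Ln (1 - z) ^ Suc k) / (of_nat (Suc k) * z)"
proof -
  have "((\<lambda>w. - (Ln (1 - w) ^ Suc k) / of_nat (Suc k)) has_field_derivative Ln (1 - w) ^ k / (1 - w))
          (at w within ball 0 1)" if "w \<in> ball 0 1" for w
  proof -
    have "w \<noteq> 1" "1 - w \<notin> \<real>\<^sub>\<le>\<^sub>0" using that one_minus_notin_nonpos_Reals[of w] by auto
    then show ?thesis
      by (auto intro!: derivative_eq_intros simp del: of_nat_Suc power_Suc simp add: field_simps)
  qed
  from cesaro_eq_primitive[OF this z] show ?thesis
    by (simp add: field_simps del: of_nat_Suc)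
qed

lemma wv_cesaro_Ln_one_minus_power:
  fixes N :: real
  assumes "N > 1"
  defines "x \<equiv> 1 - exp (- N)"
  shows "wv (of_real x) ^ k * norm (cesaro (\<lambda>z. Ln (1 - z) ^ k) (of_real x)) = N / (real (Suc k) * x)"
proof -
  have "exp (- N) < exp (-1)" using assms by simp
  also have "\<dots> = 1 / exp 1" by (simp add: exp_minus divide_inverse)
  finally have x_gt: "1 - 1 / exp 1 < x" by (simp add: x_def)
  have x: "0 < x" "x < 1" using assms by (auto simp: x_def)
  have ln_x: "ln (1 - x) = - N" by (simp add: x_def)
  have "Ln (1 - of_real x) = of_real (- N)"
    using x Ln_of_real[of "1 - x"] ln_x by simp
  moreover have "of_real x \<in> ball (0::complex) 1" "of_real x \<noteq> (0::complex)"
    using x by auto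
  ultimately have "cesaro (\<lambda>z. Ln (1 - z) ^ k) (of_real x)
      = - (of_real (- N) ^ Suc k) / (of_nat (Suc k) * of_real x)"
    using cesaro_Ln_one_minus_power by simp
  then have "norm (cesaro (\<lambda>z. Ln (1 - z) ^ k) (of_real x)) = N ^ Suc k / (real (Suc k) * x)"
    using x \<open>N > 1\<close> by (simp add: norm_divide norm_mult norm_power del: of_nat_Suc)
  moreover have "wv (of_real x) = 1 / N"
    using x_gt x ln_x by (simp add: wv_def divide_inverse)
  ultimately have "wv (of_real x) ^ k * norm (cesaro (\<lambda>z. Ln (1 - z) ^ k) (of_real x))
      = (1 / N) ^ k * (N ^ Suc k / (real (Suc k) * x))"
    by simp
  also have "\<dots> = N / (real (Suc k) * x)"
    using \<open>N > 1\<close> by (simp add: power_one_over field_simps del: of_nat_Suc)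
  finally show ?thesis .
qed

lemma cesaro_Ln_one_minus_power_notin_Hv: "cesaro (\<lambda>z. Ln (1 - z) ^ k) \<notin> Hv k"
proof
  assume "cesaro (\<lambda>z. Ln (1 - z) ^ k) \<in> Hv k"
  then obtain B where B: "\<forall>z\<in>ball 0 1. wv z ^ k * norm (cesaro (\<lambda>z. Ln (1 - z) ^ k) z) \<le> B"
    unfolding mem_Hv_iff by blast
  define N where "N = max 2 (real (Suc k) * (\<bar>B\<bar> + 1))"
  define x where "x = 1 - exp (- N)"
  have "N > 1" by (simp add: N_def)
  have x: "0 < x" "x < 1" using \<open>N > 1\<close> by (auto simp: x_def)
  have "\<bar>B\<bar> + 1 \<le> N / real (Suc k)"
    by (simp add: N_def field_simps del: of_nat_Suc)
  also have "\<dots> \<le> N / (real (Suc k) * x)"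
    using x \<open>N > 1\<close> by (intro divide_left_mono) (auto simp: mult_le_cancel_left1 simp del: of_nat_Suc)
  also have "\<dots> = wv (of_real x) ^ k * norm (cesaro (\<lambda>z. Ln (1 - z) ^ k) (of_real x))"
    using wv_cesaro_Ln_one_minus_power[OF \<open>N > 1\<close>, of k] by (simp add: x_def)
  also have "\<dots> \<le> B"
    using B x by simp
  finally show False by simp
qed

theorem proposition2p2:
  shows "(\<forall>f\<in>VH. cesaro f \<in> VH)
       \<and> (\<forall>W. VH_open W \<longrightarrow> VH_open {f\<in>VH. cesaro f \<in> W})
       \<and> (\<forall>k\<ge>1. \<not> (\<forall>f\<in>Hv k. cesaro f \<in> Hv k))"
proof (intro conjI allI impI ballI)
  fix f assume "f \<in> VH"
  then obtain k where "k \<ge> 1" "f \<in> Hv k" unfolding VH_def by auto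
  then show "cesaro f \<in> VH"
    unfolding VH_def using cesaro_Hv_Suc(1) by (auto intro!: bexI[of _ "Suc k"])
next
  fix W assume "VH_open W"
  then show "VH_open {f\<in>VH. cesaro f \<in> W}"
  proof (rule VH_open_vimage)
    show "cesaro (\<lambda>z. a * u z + b * v z) z = a * cesaro u z + b * cesaro v z"
      if "u \<in> VH" "v \<in> VH" "z \<in> ball 0 1" for u v a b z
      using cesaro_lincomb VH_holomorphic that by blast
    show "\<exists>m\<ge>1. \<exists>C\<ge>0. \<forall>u\<in>Hv k. cesaro u \<in> Hv m \<and> wnorm m (cesaro u) \<le> C * wnorm k u" for k
    proof -
      have "\<forall>u\<in>Hv k. cesaro u \<in> Hv (Suc k) \<and> wnorm (Suc k) (cesaro u) \<le> 3 * wnorm k u"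
        using cesaro_Hv_Suc by blast
      moreover have "1 \<le> Suc k" "(0::real) \<le> 3" by simp_all
      ultimately show ?thesis by blast
    qed
  qed
next
  fix k :: nat
  show "\<not> (\<forall>f\<in>Hv k. cesaro f \<in> Hv k)"
    using Ln_one_minus_power_in_Hv cesaro_Ln_one_minus_power_notin_Hv by blast
qed

end
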